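(* On $T^*\mathrm{Eng}(n)$, for all $i,j,k,l\in\{1,\dots,n\}$ with $i\neq j$ and $k\neq l$, $$\{L_{ij},L_{kl}\}=P_{Y_{n+1}}\big(\delta_{ik}L_{jl}+\delta_{jl}L_{ik}-\delta_{il}L_{jk}-\delta_{jk}L_{il}\big).$$
   Context: $\mathrm{Eng}(n)$ is the simply connected Lie group with Lie algebra basis $X_1,\dots,X_n,Y_0,\dots,Y_{n+1}$ whose only nontrivial brackets (up to antisymmetry) are $[X_i,Y_0]=Y_i$ and $[X_i,Y_i]=Y_{n+1}$, $i=1,\dots,n$; all viewed as left-invariant vector fields. For a vector field $X$, $P_X(\lambda)=\langle\lambda,X\rangle$ on $T^*\mathrm{Eng}(n)$. Poisson brackets (canonical symplectic form) are normalized so that $\{P_X,P_Y\}=P_{[X,Y]}$ for left-invariant $X,Y$. For $i,j\in\{1,\dots,n\}$, $L_{ij}:=P_{X_i}P_{Y_j}-P_{X_j}P_{Y_i}$ (so $L_{ii}=0$); $\delta$ is the Kronecker delta. *)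

theory Defs
  imports Main "HOL.Real_Vector_Spaces"
begin

text \<open>Basis of the Lie algebra eng(n): X 1..X n, Y 0..Y (n+1).\<close>
datatype eng_basis = X nat | Y nat

definition eng_basis_set :: "nat \<Rightarrow> eng_basis set" where
  "eng_basis_set n = X ` {1..n} \<union> Y ` {0..Suc n}"

text \<open>Nontrivial brackets [X i, Y 0] = Y i and [X i, Y i] = Y (n+1), before antisymmetrization:
  eng_pos n a b c holds iff c occurs with coefficient 1 in one of the listed brackets [a,b].\<close>
definition eng_pos :: "nat \<Rightarrow> eng_basis \<Rightarrow> eng_basis \<Rightarrow> eng_basis \<Rightarrow> bool" where
  "eng_pos n a b c \<longleftrightarrow>
     (\<exists>i\<in>{1..n}. (a = X i \<and> b = Y 0 \<and> c = Y i) \<or> (a = X i \<and> b = Y i \<and> c = Y (Suc n)))"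

text \<open>Structure constants: [a,b] = sum over c of eng_coef n a b c times c.\<close>
definition eng_coef :: "nat \<Rightarrow> eng_basis \<Rightarrow> eng_basis \<Rightarrow> eng_basis \<Rightarrow> real" where
  "eng_coef n a b c = (if eng_pos n a b c then 1 else 0) - (if eng_pos n b a c then 1 else 0)"

definition poisson_bracket :: "('a::{real_algebra_1,comm_ring_1} \<Rightarrow> 'a \<Rightarrow> 'a) \<Rightarrow> bool" where
  "poisson_bracket br \<longleftrightarrow>
     (\<forall>x y z. br (x + y) z = br x z + br y z) \<and>
     (\<forall>c x y. br (c *\<^sub>R x) y = c *\<^sub>R br x y) \<and>
     (\<forall>x y. br x y = - br y x) \<and>
     (\<forall>x y z. br x (y * z) = br x y * z + y * br x z) \<and>
     (\<forall>x y z. br x (br y z) + br y (br z x) + br z (br x y) = 0)"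

definition eng_momenta :: "nat \<Rightarrow> ('a::{real_algebra_1,comm_ring_1} \<Rightarrow> 'a \<Rightarrow> 'a) \<Rightarrow> (eng_basis \<Rightarrow> 'a) \<Rightarrow> bool" where
  "eng_momenta n br P \<longleftrightarrow>
     (\<forall>a\<in>eng_basis_set n. \<forall>b\<in>eng_basis_set n.
        br (P a) (P b) = (\<Sum>c\<in>eng_basis_set n. eng_coef n a b c *\<^sub>R P c))"

definition eng_L :: "(eng_basis \<Rightarrow> 'a::comm_ring_1) \<Rightarrow> nat \<Rightarrow> nat \<Rightarrow> 'a" where
  "eng_L P i j = P (X i) * P (Y j) - P (X j) * P (Y i)"

definition kdelta :: "nat \<Rightarrow> nat \<Rightarrow> 'a::comm_ring_1" where
  "kdelta i j = (if i = j then 1 else 0)"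

end

theory Submission
  imports Defs
begin

text \<open>The momenta P (X i), P (Y i), i = 1..n, satisfy canonical commutation relations with
  the central element P (Y (n+1)) in place of the constant 1: the X's commute among
  themselves, so do the Y's, and the bracket of P (X i) with P (Y j) is the Kronecker delta
  times P (Y (n+1)). The L_ij are therefore the angular momenta of a Heisenberg-type system,
  and the Leibniz rule gives them the so(n) relations scaled by P (Y (n+1)). The identity
  holds also for i = j or k = l, where both sides vanish.\<close>

lemma kdelta_commute: "kdelta i j = kdelta j i"
  by (simp add: kdelta_def)

lemma poisson_bracket_add_left:
  "poisson_bracket br \<Longrightarrow> br (x + y) z = br x z + br y z"
  unfolding poisson_bracket_def by meson

lemma poisson_bracket_skew:
  "poisson_bracket br \<Longrightarrow> br x y = - br y x"
  unfolding poisson_bracket_def by meson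

lemma poisson_bracket_mult_right:
  "poisson_bracket br \<Longrightarrow> br x (y * z) = br x y * z + y * br x z"
  unfolding poisson_bracket_def by meson

lemma poisson_bracket_mult_left:
  assumes "poisson_bracket br"
  shows "br (x * y) z = br x z * y + x * br y z"
  using poisson_bracket_skew[OF assms, of "x * y" z] poisson_bracket_mult_right[OF assms, of z x y]
    poisson_bracket_skew[OF assms, of z x] poisson_bracket_skew[OF assms, of z y]
  by (simp add: algebra_simps)

lemma poisson_bracket_diff_left:
  assumes "poisson_bracket br"
  shows "br (x - y) z = br x z - br y z"
proof -
  have "br 0 z = 0"
    using poisson_bracket_add_left[OF assms, of 0 0 z] by simp
  then have "br (- y) z = - br y z"
    using poisson_bracket_add_left[OF assms, of "- y" y z] by (simp add: eq_neg_iff_add_eq_0)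
  then show ?thesis
    using poisson_bracket_add_left[OF assms, of x "- y" z] by simp
qed

lemma poisson_bracket_diff_right:
  assumes "poisson_bracket br"
  shows "br z (x - y) = br z x - br z y"
  using poisson_bracket_skew[OF assms, of z "x - y"] poisson_bracket_diff_left[OF assms, of x y z]
    poisson_bracket_skew[OF assms, of x z] poisson_bracket_skew[OF assms, of y z]
  by simp

lemma poisson_bracket_mult_mult:
  assumes "poisson_bracket br"
  shows "br (a * b) (c * d) = br a c * d * b + c * br a d * b + a * br b c * d + a * c * br b d"
  by (simp add: poisson_bracket_mult_left[OF assms] poisson_bracket_mult_right[OF assms]
      algebra_simps)

definition canonical_brackets ::
    "('a::{real_algebra_1,comm_ring_1} \<Rightarrow> 'a \<Rightarrow> 'a) \<Rightarrow> (eng_basis \<Rightarrow> 'a) \<Rightarrow> nat set \<Rightarrow> 'a \<Rightarrow> bool"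
  where "canonical_brackets br P I z \<longleftrightarrow>
    (\<forall>a\<in>I. \<forall>b\<in>I. br (P (X a)) (P (X b)) = 0 \<and> br (P (Y a)) (P (Y b)) = 0 \<and>
                  br (P (X a)) (P (Y b)) = kdelta a b * z)"

lemma canonical_brackets_monomial:
  assumes br: "poisson_bracket br" and can: "canonical_brackets br P I z"
    and "a \<in> I" "b \<in> I" "c \<in> I" "d \<in> I"
  shows "br (P (X a) * P (Y b)) (P (X c) * P (Y d)) =
         z * (kdelta a d * (P (X c) * P (Y b)) - kdelta b c * (P (X a) * P (Y d)))"
proof -
  have YX: "br (P (Y b)) (P (X c)) = - (kdelta b c * z)"
    using poisson_bracket_skew[OF br, of "P (Y b)"] can \<open>b \<in> I\<close> \<open>c \<in> I\<close>
    by (simp add: canonical_brackets_def kdelta_commute)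
  show ?thesis
    using can assms(3-6)
    by (simp add: poisson_bracket_mult_mult[OF br] YX canonical_brackets_def algebra_simps)
qed

lemma canonical_brackets_angular_momenta:
  assumes br: "poisson_bracket br" and can: "canonical_brackets br P I z"
    and "i \<in> I" "j \<in> I" "k \<in> I" "l \<in> I"
  shows "br (eng_L P i j) (eng_L P k l) =
         z * (kdelta i k * eng_L P j l + kdelta j l * eng_L P i k
              - kdelta i l * eng_L P j k - kdelta j k * eng_L P i l)"
  using assms
  by (simp add: eng_L_def poisson_bracket_diff_left[OF br] poisson_bracket_diff_right[OF br]
      canonical_brackets_monomial[OF br can] kdelta_commute[of j i] kdelta_commute[of l i]
      kdelta_commute[of k j] kdelta_commute[of l j] algebra_simps)

lemma eng_momenta_bracket_zero:
  assumes "eng_momenta n br P" "a \<in> eng_basis_set n" "b \<in> eng_basis_set n"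
    and "\<And>c. eng_coef n a b c = 0"
  shows "br (P a) (P b) = 0"
  using assms by (simp add: eng_momenta_def)

lemma eng_coef_X_Y:
  assumes "i \<in> {1..n}" "j \<in> {1..n}"
  shows "eng_coef n (X i) (Y j) c = (if c = Y (Suc n) then kdelta i j else 0)"
  using assms unfolding eng_coef_def eng_pos_def kdelta_def by auto

lemma eng_momenta_canonical_brackets:
  assumes mom: "eng_momenta n br P"
  shows "canonical_brackets br P {1..n} (P (Y (Suc n)))"
  unfolding canonical_brackets_def
proof (intro ballI conjI)
  fix a b assume a: "a \<in> {1..n}" and b: "b \<in> {1..n}"
  have basis: "X a \<in> eng_basis_set n" "X b \<in> eng_basis_set n" "Y a \<in> eng_basis_set n"
    "Y b \<in> eng_basis_set n" "Y (Suc n) \<in> eng_basis_set n"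
    using a b by (auto simp: eng_basis_set_def)
  show "br (P (X a)) (P (X b)) = 0"
    by (rule eng_momenta_bracket_zero[OF mom basis(1,2)]) (simp add: eng_coef_def eng_pos_def)
  show "br (P (Y a)) (P (Y b)) = 0"
    by (rule eng_momenta_bracket_zero[OF mom basis(3,4)]) (simp add: eng_coef_def eng_pos_def)
  have "br (P (X a)) (P (Y b)) = (\<Sum>c\<in>eng_basis_set n. eng_coef n (X a) (Y b) c *\<^sub>R P c)"
    using mom basis unfolding eng_momenta_def by blast
  also have "\<dots> = (\<Sum>c\<in>eng_basis_set n. if c = Y (Suc n) then kdelta a b *\<^sub>R P c else 0)"
    by (rule sum.cong) (simp_all add: eng_coef_X_Y[OF a b])
  also have "\<dots> = kdelta a b *\<^sub>R P (Y (Suc n))"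
    using basis(5) by (simp add: eng_basis_set_def)
  finally show "br (P (X a)) (P (Y b)) = kdelta a b * P (Y (Suc n))"
    by (simp add: kdelta_def)
qed

theorem lemma8:
  fixes br :: "'a::{real_algebra_1,comm_ring_1} \<Rightarrow> 'a \<Rightarrow> 'a"
    and P :: "eng_basis \<Rightarrow> 'a" and n i j k l :: nat
  assumes "poisson_bracket br"
    and "eng_momenta n br P"
    and "i \<in> {1..n}" "j \<in> {1..n}" "k \<in> {1..n}" "l \<in> {1..n}"
    and "i \<noteq> j" "k \<noteq> l"
  shows "br (eng_L P i j) (eng_L P k l) =
         P (Y (Suc n)) * (kdelta i k * eng_L P j l + kdelta j l * eng_L P i k
                          - kdelta i l * eng_L P j k - kdelta j k * eng_L P i l)"
  using canonical_brackets_angular_momenta[OF assms(1) eng_momenta_canonical_brackets[OF assms(2)]]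
    assms(3-6) .

end
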